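(* Fix an integer $d\ge 2$ and $k\in\mathbb{N}$. For every point $(p,q)$ on the critical curve $\gamma_k$, i.e. for every $p\in[0,d^{-1}]$ and $q=q_c(p,k)$, we have $\mathbb{P}_{p,q}(o\leadsto\infty)=0$.
   Context: Let $[d]=\{1,\dots,d\}$ and $[d]_\star=\bigcup_{n\ge 0}[d]^n$ (finite sequences, $[d]^0=\{o\}$ with $o$ the empty sequence), with concatenation $u\cdot v$. For $k\in\mathbb{N}$, $\mathbb{T}_{d,k}$ is the oriented graph with vertex set $[d]_\star$ and oriented edges $\langle u,u\cdot a\rangle$ for $u\in[d]_\star$, $a\in[d]$ ("short edges") and $\langle u,u\cdot r\rangle$ for $u\in[d]_\star$, $r\in[d]^k$ ("long edges"). Under $\mathbb{P}_{p,q}$, independently, each short edge is open with probability $p$ and each long edge is open with probability $q$. The event $o\leadsto\infty$ means that there are infinitely many vertices $v$ reachable from $o$ by a path $o=u^0,u^1,\dots,u^n=v$ with each oriented edge $\langle u^j,u^{j+1}\rangle$ open. Let $\mathcal{P}_k=\{(p,q)\in[0,1]^2:\mathbb{P}_{p,q}(o\leadsto\infty)>0\}$, $\mathcal{N}_k=[0,1]^2\setminus\mathcal{P}_k$ and $q_c(p,k)=\inf\{q:(p,q)\in\mathcal{P}_k\}$. The critical curve $\gamma_k$ is the curve separating $\mathcal{N}_k$ from $\mathcal{P}_k$, joining $(d^{-1},0)$ and $(0,d^{-k})$; it is the graph $\{(p,q_c(p,k)):p\in[0,d^{-1}]\}$. *)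

theory Defs
  imports "HOL-Probability.Probability"
begin

text \<open>Edges are indexed by (is_short, u, r): the oriented edge from u to u @ r, where
  r = [a] with a in [d] for a short edge, and r in [d]^k for a long edge.
  The tag keeps short and long edges distinct (relevant when k = 1).\<close>

type_synonym edge = "bool \<times> nat list \<times> nat list"

definition vertices :: "nat \<Rightarrow> nat list set" where
  "vertices d = lists {1..d}"

definition short_edges :: "nat \<Rightarrow> edge set" where
  "short_edges d = {(True, u, [a]) | u a. u \<in> vertices d \<and> a \<in> {1..d}}"

definition long_edges :: "nat \<Rightarrow> nat \<Rightarrow> edge set" where
  "long_edges d k = {(False, u, r) | u r. u \<in> vertices d \<and> r \<in> vertices d \<and> length r = k}"

definition edges :: "nat \<Rightarrow> nat \<Rightarrow> edge set" where
  "edges d k = short_edges d \<union> long_edges d k"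

definition perc :: "nat \<Rightarrow> nat \<Rightarrow> real \<Rightarrow> real \<Rightarrow> (edge \<Rightarrow> bool) measure" where
  "perc d k p q = (\<Pi>\<^sub>M e\<in>edges d k. measure_pmf (bernoulli_pmf (if fst e then p else q)))"

inductive reach :: "nat \<Rightarrow> nat \<Rightarrow> (edge \<Rightarrow> bool) \<Rightarrow> nat list \<Rightarrow> bool"
  for d k \<omega> where
  root: "reach d k \<omega> []"
| step: "reach d k \<omega> u \<Longrightarrow> (b, u, r) \<in> edges d k \<Longrightarrow> \<omega> (b, u, r) \<Longrightarrow> reach d k \<omega> (u @ r)"

definition perc_event :: "nat \<Rightarrow> nat \<Rightarrow> (edge \<Rightarrow> bool) set" where
  "perc_event d k = {\<omega>. infinite {v. reach d k \<omega> v}}"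

definition Pk :: "nat \<Rightarrow> nat \<Rightarrow> (real \<times> real) set" where
  "Pk d k = {(p, q). 0 \<le> p \<and> p \<le> 1 \<and> 0 \<le> q \<and> q \<le> 1 \<and>
      measure (perc d k p q) (perc_event d k \<inter> space (perc d k p q)) > 0}"

definition q_c :: "nat \<Rightarrow> nat \<Rightarrow> real \<Rightarrow> real" where
  "q_c d k p = Inf {q. (p, q) \<in> Pk d k}"

end

theory Submission
  imports Defs
begin

text \<open>For a vertex \<open>v\<close> let its state be the list of \<open>k\<close> booleans recording which of \<open>v\<close> and its
  \<open>k - 1\<close> nearest ancestors are reached from \<open>o\<close>. The state of a child \<open>v a\<close> is obtained from that of
  \<open>v\<close> by shifting and prepending one new entry, which depends only on the short and the long edge
  into \<open>v a\<close>; moreover the events concerning the subtrees of different children are determined by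
  disjoint sets of edges. Hence the probability \<open>F\<^sub>n(\<sigma>)\<close> that some vertex \<open>n\<close> levels below a vertex of
  state \<open>\<sigma>\<close> has a nonzero state obeys \<open>F\<^sub>n\<^sub>+\<^sub>1 = \<Phi>(F\<^sub>n)\<close> with
  \<open>\<Phi>(f)(\<sigma>) = 1 - (1 - (\<pi> f(1\<sigma>') + (1 - \<pi>) f(0\<sigma>')))\<^sup>d\<close>, and the percolation probability is the
  decreasing limit of \<open>F\<^sub>n\<close> at the root state, a fixed point \<open>f\<close> of \<open>\<Phi>\<close>.

  If \<open>\<theta>(p, q\<^sub>c) > 0\<close> with \<open>q\<^sub>c > 0\<close>, strict concavity of \<open>x \<mapsto> 1 - (1 - x)\<^sup>d\<close> for \<open>d \<ge> 2\<close> makes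
  \<open>f/2\<close> a strict subsolution of \<open>\<Phi>\<close> on the finitely many states; by continuity in \<open>q\<close> it stays a
  subsolution for some \<open>q' < q\<^sub>c\<close>, so \<open>\<theta>(p, q') \<ge> \<theta>(p, q\<^sub>c)/2 > 0\<close>, contradicting minimality of \<open>q\<^sub>c\<close>.
  If \<open>q\<^sub>c = 0\<close>, only short edges count and the maximum \<open>M\<close> of the fixed point satisfies
  \<open>M \<le> 1 - (1 - M/d)\<^sup>d < M\<close> unless \<open>M = 0\<close>, because \<open>p \<le> 1/d\<close>.\<close>

definition depends_on :: "'i set \<Rightarrow> 'i set \<Rightarrow> (('i \<Rightarrow> bool) \<Rightarrow> bool) \<Rightarrow> bool" where
  "depends_on I K Q \<longleftrightarrow>
     (\<forall>\<omega>\<in>PiE I (\<lambda>_. UNIV). \<forall>\<omega>'\<in>PiE I (\<lambda>_. UNIV). (\<forall>e\<in>K. \<omega> e = \<omega>' e) \<longrightarrow> Q \<omega> = Q \<omega>')"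

lemma depends_on_mono: "depends_on I K Q \<Longrightarrow> K \<subseteq> K' \<Longrightarrow> depends_on I K' Q"
  unfolding depends_on_def by blast

lemma depends_on_not: "depends_on I K Q \<Longrightarrow> depends_on I K (\<lambda>\<omega>. \<not> Q \<omega>)"
  unfolding depends_on_def by blast

lemma depends_on_conj:
  "depends_on I K Q1 \<Longrightarrow> depends_on I K Q2 \<Longrightarrow> depends_on I K (\<lambda>\<omega>. Q1 \<omega> \<and> Q2 \<omega>)"
  unfolding depends_on_def by blast

lemma depends_on_disj:
  "depends_on I K Q1 \<Longrightarrow> depends_on I K Q2 \<Longrightarrow> depends_on I K (\<lambda>\<omega>. Q1 \<omega> \<or> Q2 \<omega>)"
  unfolding depends_on_def by blast

lemma depends_on_ball:
  "(\<And>a. a \<in> A \<Longrightarrow> depends_on I K (Q a)) \<Longrightarrow> depends_on I K (\<lambda>\<omega>. \<forall>a\<in>A. Q a \<omega>)"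
  unfolding depends_on_def by blast

lemma depends_on_coordinate: "e \<in> K \<Longrightarrow> depends_on I K (\<lambda>\<omega>. \<omega> e)"
  unfolding depends_on_def by blast

locale bool_product =
  fixes I :: "'i set" and P :: "'i \<Rightarrow> bool pmf"
begin

abbreviation "PM \<equiv> PiM I (\<lambda>i. measure_pmf (P i))"

lemma product_prob_space_pmf: "product_prob_space (\<lambda>i. measure_pmf (P i))"
  by unfold_locales

lemma prob_space_PM: "prob_space PM"
proof -
  interpret product_prob_space "\<lambda>i. measure_pmf (P i)" I by (rule product_prob_space_pmf)
  show ?thesis by unfold_locales
qed

lemma space_PM: "space PM = PiE I (\<lambda>_. UNIV)"
  by (simp add: space_PiM)

lemma sets_PiM_finite_index:
  assumes "finite K" "S \<subseteq> space (PiM K (\<lambda>i. measure_pmf (P i)))"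
  shows "S \<in> sets (PiM K (\<lambda>i. measure_pmf (P i)))"
proof -
  have fin: "finite S"
    using assms by (intro finite_subset[OF assms(2)]) (auto simp: space_PiM intro!: finite_PiE)
  have "S = (\<Union>x\<in>S. PiE K (\<lambda>i. {x i}))"
  proof
    show "S \<subseteq> (\<Union>x\<in>S. PiE K (\<lambda>i. {x i}))" using assms(2)
      by (auto simp: space_PiM PiE_def extensional_def)
    show "(\<Union>x\<in>S. PiE K (\<lambda>i. {x i})) \<subseteq> S"
    proof safe
      fix x y assume "x \<in> S" "y \<in> PiE K (\<lambda>i. {x i})"
      moreover have "x \<in> PiE K (\<lambda>_. UNIV)" using \<open>x \<in> S\<close> assms(2) by (auto simp: space_PiM)
      ultimately have "y = x" by (auto simp: PiE_def extensional_def fun_eq_iff)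
      then show "y \<in> S" using \<open>x \<in> S\<close> by simp
    qed
  qed
  also have "\<dots> \<in> sets (PiM K (\<lambda>i. measure_pmf (P i)))"
    using fin assms(1) by (intro sets.finite_UN ballI sets_PiM_I_finite) auto
  finally show ?thesis .
qed

lemma indep_vars_coordinates:
  assumes "I \<noteq> {}"
  shows "prob_space.indep_vars PM (\<lambda>i. measure_pmf (P i)) (\<lambda>i \<omega>. \<omega> i) I"
proof -
  interpret product_prob_space "\<lambda>i. measure_pmf (P i)" I by (rule product_prob_space_pmf)
  have "distr PM PM (\<lambda>x. \<lambda>i\<in>I. x i) = distr PM PM (\<lambda>x. x)"
    by (rule distr_cong) (auto simp: space_PiM PiE_def extensional_def restrict_def fun_eq_iff)
  also have "\<dots> = PiM I (\<lambda>i. distr PM (measure_pmf (P i)) (\<lambda>\<omega>. \<omega> i))"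
    by (simp add: PiM_component cong: PiM_cong)
  finally have "distr PM PM (\<lambda>x. \<lambda>i\<in>I. x i) = PiM I (\<lambda>i. distr PM (measure_pmf (P i)) (\<lambda>\<omega>. \<omega> i))" .
  moreover have "\<And>i. i \<in> I \<Longrightarrow> (\<lambda>\<omega>. \<omega> i) \<in> measurable PM (measure_pmf (P i))"
    by (rule measurable_component_singleton)
  ultimately show ?thesis
    by (subst indep_vars_iff_distr_eq_PiM'[OF assms]) simp_all
qed

definition restrict_event :: "'i set \<Rightarrow> (('i \<Rightarrow> bool) \<Rightarrow> bool) \<Rightarrow> ('i \<Rightarrow> bool) set" where
  "restrict_event K Q =
     {\<eta>\<in>space (PiM K (\<lambda>i. measure_pmf (P i))). \<exists>\<omega>\<in>space PM. restrict \<omega> K = \<eta> \<and> Q \<omega>}"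

lemma sets_restrict_event: "finite K \<Longrightarrow> restrict_event K Q \<in> sets (PiM K (\<lambda>i. measure_pmf (P i)))"
  by (rule sets_PiM_finite_index) (auto simp: restrict_event_def)

lemma Collect_eq_vimage_restrict_event:
  assumes "depends_on I K Q"
  shows "{\<omega>\<in>space PM. Q \<omega>} = (\<lambda>\<omega>. restrict \<omega> K) -` restrict_event K Q \<inter> space PM"
proof (intro set_eqI iffI)
  fix \<omega> assume "\<omega> \<in> {\<omega>\<in>space PM. Q \<omega>}"
  then show "\<omega> \<in> (\<lambda>\<omega>. restrict \<omega> K) -` restrict_event K Q \<inter> space PM"
    unfolding restrict_event_def by (auto simp: space_PiM)
next
  fix \<omega> assume \<omega>: "\<omega> \<in> (\<lambda>\<omega>. restrict \<omega> K) -` restrict_event K Q \<inter> space PM"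
  then obtain \<omega>' where "\<omega>' \<in> space PM" "restrict \<omega>' K = restrict \<omega> K" "Q \<omega>'"
    unfolding restrict_event_def by auto
  moreover have "\<forall>e\<in>K. \<omega>' e = \<omega> e"
    using \<open>restrict \<omega>' K = restrict \<omega> K\<close> by (metis restrict_apply')
  ultimately show "\<omega> \<in> {\<omega>\<in>space PM. Q \<omega>}"
    using assms \<omega> unfolding depends_on_def space_PM by blast
qed

lemma sets_Collect_depends_on:
  assumes "K \<subseteq> I" "finite K" "depends_on I K Q"
  shows "{\<omega>\<in>space PM. Q \<omega>} \<in> sets PM"
  unfolding Collect_eq_vimage_restrict_event[OF assms(3)]
  by (rule measurable_sets[OF measurable_restrict_subset[OF assms(1)] sets_restrict_event[OF assms(2)]])

lemma measure_Collect_Ball_disjoint: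
  assumes A: "finite A" "A \<noteq> {}" and "I \<noteq> {}" and disj: "disjoint_family_on K A"
    and K: "\<And>a. a \<in> A \<Longrightarrow> K a \<subseteq> I \<and> finite (K a) \<and> depends_on I (K a) (Q a)"
  shows "measure PM {\<omega>\<in>space PM. \<forall>a\<in>A. Q a \<omega>} = (\<Prod>a\<in>A. measure PM {\<omega>\<in>space PM. Q a \<omega>})"
proof -
  interpret product_prob_space "\<lambda>i. measure_pmf (P i)" I by (rule product_prob_space_pmf)
  let ?X = "\<lambda>a \<omega>. restrict (\<lambda>i. \<omega> i) (K a)"
  have "indep_vars (\<lambda>a. PiM (K a) (\<lambda>i. measure_pmf (P i))) ?X A"
    by (rule indep_vars_restrict[OF indep_vars_coordinates[OF \<open>I \<noteq> {}\<close>]]) (use K disj in blast)+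
  then have "prob (\<Inter>a\<in>A. ?X a -` restrict_event (K a) (Q a) \<inter> space PM)
      = (\<Prod>a\<in>A. prob (?X a -` restrict_event (K a) (Q a) \<inter> space PM))"
    by (rule indep_varsD_finite[OF _ A(2) A(1)]) (use K sets_restrict_event in blast)
  moreover have "\<And>a. a \<in> A \<Longrightarrow>
      ?X a -` restrict_event (K a) (Q a) \<inter> space PM = {\<omega>\<in>space PM. Q a \<omega>}"
    using Collect_eq_vimage_restrict_event K by blast
  moreover have "(\<Inter>a\<in>A. {\<omega>\<in>space PM. Q a \<omega>}) = {\<omega>\<in>space PM. \<forall>a\<in>A. Q a \<omega>}"
    using A(2) by auto
  ultimately show ?thesis by (simp cong: INF_cong prod.cong)
qed

lemma measure_Collect_conj_disjoint:
  assumes "K1 \<subseteq> I" "finite K1" "depends_on I K1 Q1" "K2 \<subseteq> I" "finite K2" "depends_on I K2 Q2"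
    "K1 \<inter> K2 = {}" "I \<noteq> {}"
  shows "measure PM {\<omega>\<in>space PM. Q1 \<omega> \<and> Q2 \<omega>}
    = measure PM {\<omega>\<in>space PM. Q1 \<omega>} * measure PM {\<omega>\<in>space PM. Q2 \<omega>}"
proof -
  have "measure PM {\<omega>\<in>space PM. \<forall>b\<in>UNIV. (if b then Q1 else Q2) \<omega>}
      = (\<Prod>b\<in>UNIV. measure PM {\<omega>\<in>space PM. (if b then Q1 else Q2) \<omega>})"
    by (rule measure_Collect_Ball_disjoint[where K="\<lambda>b. if b then K1 else K2"])
       (use assms in \<open>auto simp: disjoint_family_on_def\<close>)
  moreover have "{\<omega>\<in>space PM. \<forall>b\<in>UNIV. (if b then Q1 else Q2) \<omega>} = {\<omega>\<in>space PM. Q1 \<omega> \<and> Q2 \<omega>}"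
    by (auto simp: all_bool_eq)
  ultimately show ?thesis by (simp add: UNIV_bool mult.commute)
qed

lemma measure_Collect_coordinate:
  assumes "i \<in> I"
  shows "measure PM {\<omega>\<in>space PM. \<omega> i} = pmf (P i) True"
proof -
  interpret product_prob_space "\<lambda>i. measure_pmf (P i)" I by (rule product_prob_space_pmf)
  have "{\<omega>\<in>space PM. \<omega> i} = prod_emb I (\<lambda>i. measure_pmf (P i)) {i} (PiE {i} (\<lambda>_. {True}))"
  proof (intro set_eqI iffI)
    fix \<omega> assume "\<omega> \<in> prod_emb I (\<lambda>i. measure_pmf (P i)) {i} (PiE {i} (\<lambda>_. {True}))"
    then have "\<omega> \<in> space PM" "restrict \<omega> {i} \<in> PiE {i} (\<lambda>_. {True})"
      unfolding prod_emb_def space_PiM[symmetric] by blast+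
    have "restrict \<omega> {i} i \<in> {True}" by (rule PiE_mem[OF \<open>restrict \<omega> {i} \<in> _\<close>]) simp
    then show "\<omega> \<in> {\<omega>\<in>space PM. \<omega> i}" using \<open>\<omega> \<in> space PM\<close> by simp
  qed (auto simp: prod_emb_def space_PiM)
  moreover have "measure PM (prod_emb I (\<lambda>i. measure_pmf (P i)) {i} (PiE {i} (\<lambda>_. {True})))
      = (\<Prod>j\<in>{i}. measure (measure_pmf (P j)) {True})"
    by (rule measure_PiM_emb) (use assms in auto)
  ultimately show ?thesis by (simp add: measure_pmf_single)
qed

lemma measure_Collect_not:
  assumes "K \<subseteq> I" "finite K" "depends_on I K Q"
  shows "measure PM {\<omega>\<in>space PM. \<not> Q \<omega>} = 1 - measure PM {\<omega>\<in>space PM. Q \<omega>}"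
proof -
  interpret prob_space PM by (rule prob_space_PM)
  have "{\<omega>\<in>space PM. \<not> Q \<omega>} = space PM - {\<omega>\<in>space PM. Q \<omega>}" by blast
  then show ?thesis using prob_compl[OF sets_Collect_depends_on[OF assms]] by simp
qed

lemma measure_Collect_disj_exclusive:
  assumes "K1 \<subseteq> I" "finite K1" "depends_on I K1 Q1" "K2 \<subseteq> I" "finite K2" "depends_on I K2 Q2"
    "\<And>\<omega>. \<not> (Q1 \<omega> \<and> Q2 \<omega>)"
  shows "measure PM {\<omega>\<in>space PM. Q1 \<omega> \<or> Q2 \<omega>}
    = measure PM {\<omega>\<in>space PM. Q1 \<omega>} + measure PM {\<omega>\<in>space PM. Q2 \<omega>}"
proof -
  interpret prob_space PM by (rule prob_space_PM)
  have "{\<omega>\<in>space PM. Q1 \<omega> \<or> Q2 \<omega>} = {\<omega>\<in>space PM. Q1 \<omega>} \<union> {\<omega>\<in>space PM. Q2 \<omega>}" by blast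
  moreover have "{\<omega>\<in>space PM. Q1 \<omega>} \<inter> {\<omega>\<in>space PM. Q2 \<omega>} = {}" using assms(7) by blast
  ultimately show ?thesis
    using finite_measure_Union[OF sets_Collect_depends_on[OF assms(1-3)]
        sets_Collect_depends_on[OF assms(4-6)]] by simp
qed

lemma measure_Collect_coordinate_disj:
  assumes "i \<in> I" "j \<in> I" "i \<noteq> j"
  shows "measure PM {\<omega>\<in>space PM. \<omega> i \<or> \<omega> j} = 1 - (1 - pmf (P i) True) * (1 - pmf (P j) True)"
proof -
  have di: "depends_on I {i} (\<lambda>\<omega>. \<omega> i)" and dj: "depends_on I {j} (\<lambda>\<omega>. \<omega> j)"
    by (simp_all add: depends_on_coordinate)
  have "{\<omega>\<in>space PM. \<omega> i \<or> \<omega> j} = {\<omega>\<in>space PM. \<not> (\<not> \<omega> i \<and> \<not> \<omega> j)}" by blast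
  also have "measure PM \<dots> = 1 - measure PM {\<omega>\<in>space PM. \<not> \<omega> i \<and> \<not> \<omega> j}"
    by (rule measure_Collect_not[of "{i, j}"])
       (use assms in \<open>auto intro!: depends_on_conj depends_on_not depends_on_coordinate\<close>)
  also have "measure PM {\<omega>\<in>space PM. \<not> \<omega> i \<and> \<not> \<omega> j}
      = measure PM {\<omega>\<in>space PM. \<not> \<omega> i} * measure PM {\<omega>\<in>space PM. \<not> \<omega> j}"
    by (rule measure_Collect_conj_disjoint[OF _ _ depends_on_not[OF di] _ _ depends_on_not[OF dj]])
       (use assms in auto)
  also have "measure PM {\<omega>\<in>space PM. \<not> \<omega> i} = 1 - pmf (P i) True"
    using measure_Collect_not[of "{i}", OF _ _ di] measure_Collect_coordinate assms by simp
  also have "measure PM {\<omega>\<in>space PM. \<not> \<omega> j} = 1 - pmf (P j) True"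
    using measure_Collect_not[of "{j}", OF _ _ dj] measure_Collect_coordinate assms by simp
  finally show ?thesis .
qed


end

definition edge_target :: "edge \<Rightarrow> nat list" where
  "edge_target e = fst (snd e) @ snd (snd e)"

text \<open>The long edge ending at \<open>v @ [a]\<close>; it belongs to the tree only if \<open>k \<le> length v + 1\<close>.\<close>

definition long_edge_into :: "nat \<Rightarrow> nat list \<Rightarrow> nat \<Rightarrow> edge" where
  "long_edge_into k v a =
     (False, take (length v + 1 - k) (v @ [a]), drop (length v + 1 - k) (v @ [a]))"

definition state_step :: "nat \<Rightarrow> nat list \<Rightarrow> bool list \<Rightarrow> (edge \<Rightarrow> bool) \<Rightarrow> nat \<Rightarrow> bool list" where
  "state_step k v \<sigma> \<omega> a =
     ((hd \<sigma> \<and> \<omega> (True, v, [a])) \<or> (last \<sigma> \<and> \<omega> (long_edge_into k v a))) # butlast \<sigma>"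

fun state_run :: "nat \<Rightarrow> nat list \<Rightarrow> bool list \<Rightarrow> (edge \<Rightarrow> bool) \<Rightarrow> nat list \<Rightarrow> bool list" where
  "state_run k v \<sigma> \<omega> [] = \<sigma>"
| "state_run k v \<sigma> \<omega> (a # x) = state_run k (v @ [a]) (state_step k v \<sigma> \<omega> a) \<omega> x"

definition survives :: "nat \<Rightarrow> nat \<Rightarrow> nat list \<Rightarrow> bool list \<Rightarrow> nat \<Rightarrow> (edge \<Rightarrow> bool) \<Rightarrow> bool" where
  "survives d k v \<sigma> n \<omega> \<longleftrightarrow>
     (\<exists>x\<in>lists {1..d}. length x = n \<and> True \<in> set (state_run k v \<sigma> \<omega> x))"

definition edges_below :: "nat \<Rightarrow> nat \<Rightarrow> nat list \<Rightarrow> nat \<Rightarrow> edge set" where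
  "edges_below d k v n =
     {e \<in> edges d k. \<exists>y. edge_target e = v @ y \<and> 1 \<le> length y \<and> length y \<le> n}"

definition edges_into :: "nat \<Rightarrow> nat \<Rightarrow> nat list \<Rightarrow> edge set" where
  "edges_into d k c = {e \<in> edges d k. edge_target e = c}"

lemma survives_0: "survives d k v \<sigma> 0 \<omega> \<longleftrightarrow> True \<in> set \<sigma>"
  by (auto simp: survives_def)

lemma survives_Suc:
  "survives d k v \<sigma> (Suc n) \<omega> \<longleftrightarrow> (\<exists>a\<in>{1..d}. survives d k (v @ [a]) (state_step k v \<sigma> \<omega> a) n \<omega>)"
proof
  assume "survives d k v \<sigma> (Suc n) \<omega>"
  then obtain x where x: "x \<in> lists {1..d}" "length x = Suc n" "True \<in> set (state_run k v \<sigma> \<omega> x)"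
    unfolding survives_def by blast
  then obtain a x' where "x = a # x'" by (cases x) auto
  with x show "\<exists>a\<in>{1..d}. survives d k (v @ [a]) (state_step k v \<sigma> \<omega> a) n \<omega>"
    unfolding survives_def by auto
next
  assume "\<exists>a\<in>{1..d}. survives d k (v @ [a]) (state_step k v \<sigma> \<omega> a) n \<omega>"
  then obtain a x where "a \<in> {1..d}" "x \<in> lists {1..d}" "length x = n"
     "True \<in> set (state_run k (v @ [a]) (state_step k v \<sigma> \<omega> a) \<omega> x)"
    unfolding survives_def by blast
  then show "survives d k v \<sigma> (Suc n) \<omega>"
    unfolding survives_def by (intro bexI[of _ "a # x"]) auto
qed

lemma survives_state_step_cases:
  "survives d k (v @ [a]) (state_step k v \<sigma> \<omega> a) n \<omega> \<longleftrightarrow>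
     (hd (state_step k v \<sigma> \<omega> a) \<and> survives d k (v @ [a]) (True # butlast \<sigma>) n \<omega>) \<or>
     (\<not> hd (state_step k v \<sigma> \<omega> a) \<and> survives d k (v @ [a]) (False # butlast \<sigma>) n \<omega>)"
proof -
  have "state_step k v \<sigma> \<omega> a = hd (state_step k v \<sigma> \<omega> a) # butlast \<sigma>"
    by (simp add: state_step_def)
  then show ?thesis by (cases "hd (state_step k v \<sigma> \<omega> a)") (metis, metis)
qed

lemma short_edge_in_edges: "v \<in> lists {1..d} \<Longrightarrow> a \<in> {1..d} \<Longrightarrow> (True, v, [a]) \<in> edges d k"
  by (auto simp: edges_def short_edges_def vertices_def)

lemma long_edge_into_in_edges:
  "v \<in> lists {1..d} \<Longrightarrow> a \<in> {1..d} \<Longrightarrow> k \<le> length v + 1 \<Longrightarrow> long_edge_into k v a \<in> edges d k"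
  unfolding edges_def long_edges_def vertices_def long_edge_into_def
  by (auto dest: in_set_takeD in_set_dropD)

lemma edges_nonempty: "1 \<le> d \<Longrightarrow> edges d k \<noteq> {}"
  using short_edge_in_edges[of "[]" d 1 k] by auto

lemma edge_target_short: "edge_target (True, v, [a]) = v @ [a]"
  by (simp add: edge_target_def)

lemma edge_target_long_edge_into: "edge_target (long_edge_into k v a) = v @ [a]"
  unfolding edge_target_def long_edge_into_def
  by (simp only: fst_conv snd_conv append_take_drop_id)

lemma edge_target_in_lists: "e \<in> edges d k \<Longrightarrow> edge_target e \<in> lists {1..d}"
  by (auto simp: edges_def short_edges_def long_edges_def vertices_def edge_target_def)

lemma long_edge_into_eq:
  assumes "\<omega> \<in> PiE (edges d k) (\<lambda>_. UNIV)" "\<omega>' \<in> PiE (edges d k) (\<lambda>_. UNIV)"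
    and "long_edge_into k v a \<in> edges d k \<Longrightarrow> \<omega> (long_edge_into k v a) = \<omega>' (long_edge_into k v a)"
  shows "\<omega> (long_edge_into k v a) = \<omega>' (long_edge_into k v a)"
proof (cases "long_edge_into k v a \<in> edges d k")
  case False
  then show ?thesis using PiE_arb[OF assms(1) False] PiE_arb[OF assms(2) False] by simp
qed (use assms in blast)

lemma edges_below_Cons_subset: "edges_below d k (v @ [a]) n \<subseteq> edges_below d k v (Suc n)"
proof
  fix e assume "e \<in> edges_below d k (v @ [a]) n"
  then obtain y where "e \<in> edges d k" "edge_target e = (v @ [a]) @ y" "1 \<le> length y" "length y \<le> n"
    unfolding edges_below_def by blast
  then show "e \<in> edges_below d k v (Suc n)"
    unfolding edges_below_def by (intro CollectI conjI exI[of _ "a # y"]) auto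
qed

lemma state_run_cong:
  assumes "\<omega> \<in> PiE (edges d k) (\<lambda>_. UNIV)" "\<omega>' \<in> PiE (edges d k) (\<lambda>_. UNIV)"
  shows "v \<in> lists {1..d} \<Longrightarrow> x \<in> lists {1..d} \<Longrightarrow> length x \<le> n \<Longrightarrow>
    \<forall>e\<in>edges_below d k v n. \<omega> e = \<omega>' e \<Longrightarrow> state_run k v \<sigma> \<omega> x = state_run k v \<sigma> \<omega>' x"
proof (induction x arbitrary: v \<sigma> n)
  case Nil
  then show ?case by simp
next
  case (Cons a x)
  then obtain n' where n: "n = Suc n'" by (cases n) auto
  have a: "a \<in> {1..d}" using Cons by simp
  have "(True, v, [a]) \<in> edges_below d k v n"
    unfolding edges_below_def edge_target_short using short_edge_in_edges[OF Cons.prems(1) a] n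
    by (intro CollectI conjI exI[of _ "[a]"]) (auto simp: edge_target_short)
  then have "\<omega> (True, v, [a]) = \<omega>' (True, v, [a])"
    using Cons.prems(4) by blast
  moreover have "\<omega> (long_edge_into k v a) = \<omega>' (long_edge_into k v a)"
  proof (rule long_edge_into_eq[OF assms])
    assume "long_edge_into k v a \<in> edges d k"
    then have "long_edge_into k v a \<in> edges_below d k v n"
      unfolding edges_below_def edge_target_long_edge_into using n
      by (intro CollectI conjI exI[of _ "[a]"]) (auto simp: edge_target_long_edge_into)
    then show "\<omega> (long_edge_into k v a) = \<omega>' (long_edge_into k v a)" using Cons.prems(4) by blast
  qed
  ultimately have "state_step k v \<sigma> \<omega> a = state_step k v \<sigma> \<omega>' a"
    unfolding state_step_def by simp
  moreover have "state_run k (v @ [a]) (state_step k v \<sigma> \<omega>' a) \<omega> x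
      = state_run k (v @ [a]) (state_step k v \<sigma> \<omega>' a) \<omega>' x"
  proof (rule Cons.IH)
    show "v @ [a] \<in> lists {1..d}" "x \<in> lists {1..d}" "length x \<le> n'"
      using Cons.prems a n by simp_all
    show "\<forall>e\<in>edges_below d k (v @ [a]) n'. \<omega> e = \<omega>' e"
      using Cons.prems(4) edges_below_Cons_subset[of d k v a n'] n by blast
  qed
  ultimately show ?case by simp
qed

lemma depends_on_survives:
  assumes "v \<in> lists {1..d}"
  shows "depends_on (edges d k) (edges_below d k v n) (survives d k v \<sigma> n)"
  unfolding depends_on_def
proof (intro ballI impI)
  fix \<omega> \<omega>' :: "edge \<Rightarrow> bool"
  assume \<omega>: "\<omega> \<in> PiE (edges d k) (\<lambda>_. UNIV)" "\<omega>' \<in> PiE (edges d k) (\<lambda>_. UNIV)"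
    and agree: "\<forall>e\<in>edges_below d k v n. \<omega> e = \<omega>' e"
  have "(length x = n \<and> True \<in> set (state_run k v \<sigma> \<omega> x)) =
      (length x = n \<and> True \<in> set (state_run k v \<sigma> \<omega>' x))" if "x \<in> lists {1..d}" for x
    using state_run_cong[OF \<omega> assms that _ agree, of \<sigma>] by (cases "length x = n") simp_all
  then show "survives d k v \<sigma> n \<omega> = survives d k v \<sigma> n \<omega>'"
    unfolding survives_def by (rule bex_cong[OF refl])
qed

lemma depends_on_state_step:
  assumes v: "v \<in> lists {1..d}" and a: "a \<in> {1..d}"
  shows "depends_on (edges d k) (edges_into d k (v @ [a])) (\<lambda>\<omega>. Q (state_step k v \<sigma> \<omega> a))"
  unfolding depends_on_def
proof (intro ballI impI)
  fix \<omega> \<omega>' :: "edge \<Rightarrow> bool"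
  assume \<omega>: "\<omega> \<in> PiE (edges d k) (\<lambda>_. UNIV)" "\<omega>' \<in> PiE (edges d k) (\<lambda>_. UNIV)"
    and agree: "\<forall>e\<in>edges_into d k (v @ [a]). \<omega> e = \<omega>' e"
  have "\<omega> (True, v, [a]) = \<omega>' (True, v, [a])"
    using agree short_edge_in_edges[OF v a, of k] by (auto simp: edges_into_def edge_target_short)
  moreover have "\<omega> (long_edge_into k v a) = \<omega>' (long_edge_into k v a)"
  proof (rule long_edge_into_eq[OF \<omega>])
    assume "long_edge_into k v a \<in> edges d k"
    then have "long_edge_into k v a \<in> edges_into d k (v @ [a])"
      by (simp add: edges_into_def edge_target_long_edge_into)
    then show "\<omega> (long_edge_into k v a) = \<omega>' (long_edge_into k v a)" using agree by blast
  qed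
  ultimately show "Q (state_step k v \<sigma> \<omega> a) = Q (state_step k v \<sigma> \<omega>' a)"
    unfolding state_step_def by simp
qed

definition edge_of_target :: "nat \<Rightarrow> bool \<Rightarrow> nat list \<Rightarrow> edge" where
  "edge_of_target k b t =
     (if b then (True, butlast t, [last t]) else (False, take (length t - k) t, drop (length t - k) t))"

lemma edge_of_target_eq: "e \<in> edges d k \<Longrightarrow> edge_of_target k (fst e) (edge_target e) = e"
  by (auto simp: edges_def short_edges_def long_edges_def edge_of_target_def edge_target_def)

lemma finite_edges_target_in:
  assumes "finite T"
  shows "finite {e \<in> edges d k. edge_target e \<in> T}"
proof (rule finite_subset)
  show "{e \<in> edges d k. edge_target e \<in> T} \<subseteq> (\<lambda>(b, t). edge_of_target k b t) ` (UNIV \<times> T)"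
  proof
    fix e assume "e \<in> {e \<in> edges d k. edge_target e \<in> T}"
    then show "e \<in> (\<lambda>(b, t). edge_of_target k b t) ` (UNIV \<times> T)"
      using edge_of_target_eq[of e d k] by (intro image_eqI[of _ _ "(fst e, edge_target e)"]) auto
  qed
  show "finite ((\<lambda>(b, t). edge_of_target k b t) ` (UNIV \<times> T))" using assms by simp
qed

lemma finite_edges_below: "finite (edges_below d k v n)"
proof (rule finite_subset)
  let ?T = "{t. set t \<subseteq> {1..d} \<and> length t \<le> length v + n}"
  show "edges_below d k v n \<subseteq> {e \<in> edges d k. edge_target e \<in> ?T}"
    unfolding edges_below_def using edge_target_in_lists by fastforce
  show "finite {e \<in> edges d k. edge_target e \<in> ?T}"
    by (intro finite_edges_target_in finite_lists_length_le) simp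
qed

lemma finite_edges_into: "finite (edges_into d k c)"
  using finite_edges_target_in[of "{c}" d k] unfolding edges_into_def by simp

lemma edges_below_subset: "edges_below d k v n \<subseteq> edges d k"
  unfolding edges_below_def by auto

lemma edges_into_subset: "edges_into d k c \<subseteq> edges d k"
  unfolding edges_into_def by auto

lemma edges_into_Int_edges_below: "edges_into d k c \<inter> edges_below d k c n = {}"
  unfolding edges_into_def edges_below_def by auto

lemma disjoint_family_on_child_edges:
  "disjoint_family_on (\<lambda>a. edges_into d k (v @ [a]) \<union> edges_below d k (v @ [a]) n) A"
  unfolding disjoint_family_on_def edges_into_def edges_below_def by auto

text \<open>The probability that the new entry of \<open>state_step\<close> is \<open>True\<close>: the short edge counts if \<open>v\<close>
  is reached, the long edge if the ancestor \<open>k - 1\<close> levels above \<open>v\<close> is.\<close>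

definition head_prob :: "real \<Rightarrow> real \<Rightarrow> bool list \<Rightarrow> real" where
  "head_prob p q \<sigma> =
     (if hd \<sigma> then (if last \<sigma> then 1 - (1 - p) * (1 - q) else p) else (if last \<sigma> then q else 0))"

definition child_survival :: "real \<Rightarrow> real \<Rightarrow> (bool list \<Rightarrow> real) \<Rightarrow> bool list \<Rightarrow> real" where
  "child_survival p q f \<sigma> =
     head_prob p q \<sigma> * f (True # butlast \<sigma>) + (1 - head_prob p q \<sigma>) * f (False # butlast \<sigma>)"

definition survival_map :: "nat \<Rightarrow> real \<Rightarrow> real \<Rightarrow> (bool list \<Rightarrow> real) \<Rightarrow> bool list \<Rightarrow> real" where
  "survival_map d p q f \<sigma> = 1 - (1 - child_survival p q f \<sigma>) ^ d"

fun survival :: "nat \<Rightarrow> real \<Rightarrow> real \<Rightarrow> nat \<Rightarrow> bool list \<Rightarrow> real" where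
  "survival d p q 0 \<sigma> = (if True \<in> set \<sigma> then 1 else 0)"
| "survival d p q (Suc n) \<sigma> = survival_map d p q (survival d p q n) \<sigma>"

text \<open>Entries of a state referring to ancestors above the root are \<open>False\<close>.\<close>

definition admissible :: "nat \<Rightarrow> nat list \<Rightarrow> bool list \<Rightarrow> bool" where
  "admissible k v \<sigma> \<longleftrightarrow> length \<sigma> = k \<and> (\<forall>i<k. length v < i \<longrightarrow> \<not> \<sigma> ! i)"

lemma admissible_child:
  assumes "admissible k v \<sigma>" "1 \<le> k"
  shows "admissible k (v @ [a]) (b # butlast \<sigma>)"
  unfolding admissible_def
proof (intro conjI allI impI)
  show "length (b # butlast \<sigma>) = k" using assms by (auto simp: admissible_def)
  fix i assume i: "i < k" "length (v @ [a]) < i"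
  then obtain j where j: "i = Suc j" by (cases i) auto
  have "(b # butlast \<sigma>) ! i = \<sigma> ! j"
    using assms i j by (simp add: nth_butlast admissible_def)
  then show "\<not> (b # butlast \<sigma>) ! i" using assms i j by (auto simp: admissible_def)
qed

lemma admissible_last_imp:
  assumes "admissible k v \<sigma>" "1 \<le> k" "last \<sigma>"
  shows "k \<le> length v + 1"
proof (rule ccontr)
  assume "\<not> k \<le> length v + 1"
  have "\<sigma> \<noteq> []" using assms by (auto simp: admissible_def)
  then have "last \<sigma> = \<sigma> ! (k - 1)" using assms by (simp add: last_conv_nth admissible_def)
  then show False using assms \<open>\<not> k \<le> length v + 1\<close> by (auto simp: admissible_def)
qed

abbreviation edge_pmf :: "real \<Rightarrow> real \<Rightarrow> edge \<Rightarrow> bool pmf" where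
  "edge_pmf p q \<equiv> (\<lambda>e. bernoulli_pmf (if fst e then p else q))"

lemma perc_eq_PM: "perc d k p q = bool_product.PM (edges d k) (edge_pmf p q)"
  by (simp add: perc_def)

context
  fixes d k :: nat and p q :: real
  assumes p: "0 \<le> p" "p \<le> 1" and q: "0 \<le> q" "q \<le> 1" and k: "1 \<le> k" and d: "1 \<le> d"
begin

interpretation bool_product "edges d k" "edge_pmf p q" .

lemma measure_head_state_step:
  assumes v: "v \<in> lists {1..d}" and a: "a \<in> {1..d}" and adm: "admissible k v \<sigma>"
  shows "measure PM {\<omega>\<in>space PM. hd (state_step k v \<sigma> \<omega> a)} = head_prob p q \<sigma>"
proof -
  define s where "s = (True, v, [a])"
  define t where "t = long_edge_into k v a"
  have hd_eq: "hd (state_step k v \<sigma> \<omega> a) \<longleftrightarrow> (hd \<sigma> \<and> \<omega> s) \<or> (last \<sigma> \<and> \<omega> t)" for \<omega>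
    by (simp add: state_step_def s_def t_def)
  have s: "s \<in> edges d k" unfolding s_def by (rule short_edge_in_edges[OF v a])
  have ps: "measure PM {\<omega>\<in>space PM. \<omega> s} = p"
    using measure_Collect_coordinate[OF s] p by (simp add: s_def)
  have t: "t \<in> edges d k" and pt: "measure PM {\<omega>\<in>space PM. \<omega> t} = q" if "last \<sigma>"
  proof -
    show t: "t \<in> edges d k"
      unfolding t_def by (rule long_edge_into_in_edges[OF v a admissible_last_imp[OF adm k that]])
    show "measure PM {\<omega>\<in>space PM. \<omega> t} = q"
      using measure_Collect_coordinate[OF t] q by (simp add: t_def long_edge_into_def)
  qed
  have "s \<noteq> t" by (simp add: s_def t_def long_edge_into_def)
  then have pst: "measure PM {\<omega>\<in>space PM. \<omega> s \<or> \<omega> t} = 1 - (1 - p) * (1 - q)" if "last \<sigma>"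
    using measure_Collect_coordinate_disj[OF s t[OF that]] p q
    by (simp add: s_def t_def long_edge_into_def)
  show ?thesis
    using ps pt pst by (cases "hd \<sigma>"; cases "last \<sigma>") (simp_all add: hd_eq head_prob_def)
qed

definition child_edges :: "nat list \<Rightarrow> nat \<Rightarrow> nat \<Rightarrow> edge set" where
  "child_edges v n a = edges_into d k (v @ [a]) \<union> edges_below d k (v @ [a]) n"

lemma depends_on_survives_child:
  assumes v: "v \<in> lists {1..d}" and a: "a \<in> {1..d}"
  shows "depends_on (edges d k) (child_edges v n a)
           (\<lambda>\<omega>. survives d k (v @ [a]) (state_step k v \<sigma> \<omega> a) n \<omega>)"
proof -
  have h: "depends_on (edges d k) (child_edges v n a) (\<lambda>\<omega>. hd (state_step k v \<sigma> \<omega> a))"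
    by (rule depends_on_mono[OF depends_on_state_step[OF v a]]) (simp add: child_edges_def)
  have e: "depends_on (edges d k) (child_edges v n a) (survives d k (v @ [a]) \<tau> n)" for \<tau>
    by (rule depends_on_mono[OF depends_on_survives]) (use v a in \<open>simp_all add: child_edges_def\<close>)
  show ?thesis
    unfolding survives_state_step_cases
    by (intro depends_on_disj depends_on_conj depends_on_not h e)
qed

lemma measure_survives_child:
  assumes v: "v \<in> lists {1..d}" and a: "a \<in> {1..d}" and adm: "admissible k v \<sigma>"
    and subtree: "\<And>b. measure PM {\<omega>\<in>space PM. survives d k (v @ [a]) (b # butlast \<sigma>) n \<omega>}
               = survival d p q n (b # butlast \<sigma>)"
  shows "measure PM {\<omega>\<in>space PM. survives d k (v @ [a]) (state_step k v \<sigma> \<omega> a) n \<omega>}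
    = child_survival p q (survival d p q n) \<sigma>"
proof -
  let ?H = "\<lambda>\<omega>. hd (state_step k v \<sigma> \<omega> a)"
  let ?S = "\<lambda>b. survives d k (v @ [a]) (b # butlast \<sigma>) n"
  have va: "v @ [a] \<in> lists {1..d}" using v a by simp
  have dH: "depends_on (edges d k) (edges_into d k (v @ [a])) ?H"
    by (rule depends_on_state_step[OF v a])
  have dS: "depends_on (edges d k) (edges_below d k (v @ [a]) n) (?S b)" for b
    by (rule depends_on_survives[OF va])
  have sub: "edges_into d k (v @ [a]) \<subseteq> child_edges v n a"
    "edges_below d k (v @ [a]) n \<subseteq> child_edges v n a"
    by (auto simp: child_edges_def)
  have fin: "finite (child_edges v n a)" and sub': "child_edges v n a \<subseteq> edges d k"
    using finite_edges_into finite_edges_below edges_into_subset edges_below_subset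
    by (auto simp: child_edges_def)
  have conj: "measure PM {\<omega>\<in>space PM. H \<omega> \<and> ?S b \<omega>}
      = measure PM {\<omega>\<in>space PM. H \<omega>} * survival d p q n (b # butlast \<sigma>)"
    if "depends_on (edges d k) (edges_into d k (v @ [a])) H" for H b
    by (simp only: subtree[symmetric],
        rule measure_Collect_conj_disjoint[OF edges_into_subset finite_edges_into that
          edges_below_subset finite_edges_below dS edges_into_Int_edges_below edges_nonempty[OF d]])
  have "measure PM {\<omega>\<in>space PM. survives d k (v @ [a]) (state_step k v \<sigma> \<omega> a) n \<omega>}
      = measure PM {\<omega>\<in>space PM. (?H \<omega> \<and> ?S True \<omega>) \<or> (\<not> ?H \<omega> \<and> ?S False \<omega>)}"
    by (simp only: survives_state_step_cases)
  also have "\<dots> = measure PM {\<omega>\<in>space PM. ?H \<omega> \<and> ?S True \<omega>}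
      + measure PM {\<omega>\<in>space PM. \<not> ?H \<omega> \<and> ?S False \<omega>}"
    by (rule measure_Collect_disj_exclusive[OF sub' fin _ sub' fin])
       (use sub in \<open>auto intro!: depends_on_conj depends_on_not depends_on_mono[OF dH] depends_on_mono[OF dS]\<close>)
  also have "\<dots> = head_prob p q \<sigma> * survival d p q n (True # butlast \<sigma>)
      + (1 - head_prob p q \<sigma>) * survival d p q n (False # butlast \<sigma>)"
    unfolding conj[OF dH] conj[OF depends_on_not[OF dH]]
      measure_Collect_not[OF edges_into_subset finite_edges_into dH]
      measure_head_state_step[OF v a adm] ..
  finally show ?thesis unfolding child_survival_def .
qed

lemma measure_survives:
  "v \<in> lists {1..d} \<Longrightarrow> admissible k v \<sigma> \<Longrightarrow>
    measure PM {\<omega>\<in>space PM. survives d k v \<sigma> n \<omega>} = survival d p q n \<sigma>"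
proof (induction n arbitrary: v \<sigma>)
  case 0
  interpret prob_space PM by (rule prob_space_PM)
  show ?case by (simp add: survives_0 prob_space)
next
  case (Suc n)
  define G where "G a \<omega> \<longleftrightarrow> survives d k (v @ [a]) (state_step k v \<sigma> \<omega> a) n \<omega>" for a \<omega>
  have dG: "depends_on (edges d k) (child_edges v n a) (\<lambda>\<omega>. \<not> G a \<omega>)" if "a \<in> {1..d}" for a
    unfolding G_def by (rule depends_on_not[OF depends_on_survives_child[OF Suc.prems(1) that]])
  have fin: "finite (child_edges v n a)" and sub: "child_edges v n a \<subseteq> edges d k" for a
    using finite_edges_into finite_edges_below edges_into_subset edges_below_subset
    by (auto simp: child_edges_def)
  have pG: "measure PM {\<omega>\<in>space PM. G a \<omega>} = child_survival p q (survival d p q n) \<sigma>"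
    if a: "a \<in> {1..d}" for a
    unfolding G_def using Suc.prems a admissible_child[OF Suc.prems(2) k]
    by (intro measure_survives_child Suc.IH) simp_all
  have "{\<omega>\<in>space PM. survives d k v \<sigma> (Suc n) \<omega>} = {\<omega>\<in>space PM. \<not> (\<forall>a\<in>{1..d}. \<not> G a \<omega>)}"
    unfolding G_def survives_Suc by blast
  also have "measure PM \<dots> = 1 - measure PM {\<omega>\<in>space PM. \<forall>a\<in>{1..d}. \<not> G a \<omega>}"
    by (rule measure_Collect_not[of "\<Union>a\<in>{1..d}. child_edges v n a"])
       (use fin sub in \<open>auto intro!: depends_on_ball depends_on_mono[OF dG]\<close>)
  also have "measure PM {\<omega>\<in>space PM. \<forall>a\<in>{1..d}. \<not> G a \<omega>}
      = (\<Prod>a\<in>{1..d}. measure PM {\<omega>\<in>space PM. \<not> G a \<omega>})"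
  proof (rule measure_Collect_Ball_disjoint[where K="child_edges v n"])
    show "disjoint_family_on (child_edges v n) {1..d}"
      unfolding child_edges_def by (rule disjoint_family_on_child_edges)
  qed (use d fin sub dG edges_nonempty[OF d] in auto)
  also have "\<dots> = (\<Prod>a\<in>{1..d}. 1 - child_survival p q (survival d p q n) \<sigma>)"
    using measure_Collect_not[OF sub fin dG] pG by simp
  finally show ?case by (simp add: survival_map_def)
qed

end

lemma reach_in_lists: "reach d k \<omega> w \<Longrightarrow> w \<in> lists {1..d}"
  by (induction rule: reach.induct) (auto simp: edges_def short_edges_def long_edges_def vertices_def)

lemma reach_snoc:
  assumes k: "1 \<le> k" and v: "v \<in> lists {1..d}" and a: "a \<in> {1..d}"
  shows "reach d k \<omega> (v @ [a]) \<longleftrightarrow> (reach d k \<omega> v \<and> \<omega> (True, v, [a])) \<or>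
    (k \<le> length v + 1 \<and> reach d k \<omega> (take (length v + 1 - k) (v @ [a])) \<and> \<omega> (long_edge_into k v a))"
    (is "_ \<longleftrightarrow> ?short \<or> ?long")
proof
  assume "reach d k \<omega> (v @ [a])"
  then show "?short \<or> ?long"
  proof (cases rule: reach.cases)
    case (step u b r)
    show ?thesis
    proof (cases b)
      case True
      then obtain c where "r = [c]" using step(3) by (auto simp: edges_def short_edges_def long_edges_def)
      then show ?thesis using step True by auto
    next
      case False
      then have "length r = k" using step(3) by (auto simp: edges_def short_edges_def long_edges_def)
      then have len: "length u + k = length v + 1" using step(1)
        by (metis length_append length_append_singleton add.commute Suc_eq_plus1)
      then have "u = take (length v + 1 - k) (v @ [a])" "r = drop (length v + 1 - k) (v @ [a])"
        using step(1) by (metis add_diff_cancel_right' append_eq_conv_conj)+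
      then have "(b, u, r) = long_edge_into k v a" using False by (simp add: long_edge_into_def)
      then show ?thesis using step len by auto
    qed
  qed simp
next
  assume "?short \<or> ?long"
  then show "reach d k \<omega> (v @ [a])"
  proof
    assume ?short
    then show ?thesis using reach.step[of d k \<omega> v True "[a]"] short_edge_in_edges[OF v a] by auto
  next
    assume long: ?long
    then have "long_edge_into k v a \<in> edges d k" using long_edge_into_in_edges[OF v a] by simp
    then have "reach d k \<omega> (take (length v + 1 - k) (v @ [a]) @ drop (length v + 1 - k) (v @ [a]))"
      using reach.step[of d k \<omega> "take (length v + 1 - k) (v @ [a])" False] long
      by (simp add: long_edge_into_def)
    then show ?thesis by (simp del: take_append drop_append)
  qed
qed

definition reach_state :: "nat \<Rightarrow> nat \<Rightarrow> (edge \<Rightarrow> bool) \<Rightarrow> nat list \<Rightarrow> bool list" where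
  "reach_state d k \<omega> v = map (\<lambda>j. j \<le> length v \<and> reach d k \<omega> (take (length v - j) v)) [0..<k]"

definition root_state :: "nat \<Rightarrow> bool list" where
  "root_state k = True # replicate (k - 1) False"

lemma state_step_reach_state:
  assumes k: "1 \<le> k" and v: "v \<in> lists {1..d}" and a: "a \<in> {1..d}"
  shows "state_step k v (reach_state d k \<omega> v) \<omega> a = reach_state d k \<omega> (v @ [a])"
proof -
  obtain k' where k': "k = Suc k'" using k by (cases k) auto
  define f where "f j \<longleftrightarrow> j \<le> length v \<and> reach d k \<omega> (take (length v - j) v)" for j
  have state: "reach_state d k \<omega> v = map f [0..<k]" unfolding reach_state_def f_def ..
  have upt_Cons: "[0..<k] = 0 # map Suc [0..<k']"
    unfolding k' by (simp only: upt_conv_Cons zero_less_Suc map_Suc_upt)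
  have upt_snoc: "[0..<k] = [0..<k'] @ [k']" unfolding k' by simp
  have hd: "hd (reach_state d k \<omega> v) = reach d k \<omega> v"
    unfolding state upt_Cons f_def by simp
  have last: "last (reach_state d k \<omega> v) \<longleftrightarrow> k' \<le> length v \<and> reach d k \<omega> (take (length v - k') v)"
    unfolding state upt_snoc f_def by simp
  have "k' \<le> length v \<longleftrightarrow> k \<le> length v + 1"
    and "k \<le> length v + 1 \<Longrightarrow> take (length v + 1 - k) (v @ [a]) = take (length v - k') v"
    unfolding k' by auto
  then have "(hd (reach_state d k \<omega> v) \<and> \<omega> (True, v, [a])) \<or>
      (last (reach_state d k \<omega> v) \<and> \<omega> (long_edge_into k v a)) \<longleftrightarrow> reach d k \<omega> (v @ [a])"
    unfolding hd last reach_snoc[OF k v a] by auto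
  moreover have "butlast (reach_state d k \<omega> v) = map f [0..<k']"
    unfolding state upt_snoc by simp
  moreover have "reach_state d k \<omega> (v @ [a]) = reach d k \<omega> (v @ [a]) # map f [0..<k']"
    unfolding reach_state_def upt_Cons f_def by simp
  ultimately show ?thesis unfolding state_step_def by simp
qed

lemma state_run_reach_state:
  assumes k: "1 \<le> k"
  shows "v \<in> lists {1..d} \<Longrightarrow> x \<in> lists {1..d} \<Longrightarrow>
    state_run k v (reach_state d k \<omega> v) \<omega> x = reach_state d k \<omega> (v @ x)"
proof (induction x arbitrary: v)
  case (Cons a x)
  then show ?case using state_step_reach_state[OF k Cons.prems(1), of a \<omega>] by simp
qed simp

lemma reach_state_Nil:
  assumes "1 \<le> k"
  shows "reach_state d k \<omega> [] = root_state k"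
proof -
  have "[0..<k] = 0 # [1..<k]" using assms by (simp add: upt_rec)
  moreover have "map (\<lambda>j. j \<le> 0 \<and> reach d k \<omega> []) [1..<k] = map (\<lambda>j. False) [1..<k]"
    by (rule map_cong) auto
  ultimately show ?thesis
    unfolding reach_state_def root_state_def by (simp add: reach.root map_replicate_const)
qed

lemma admissible_root_state: "1 \<le> k \<Longrightarrow> admissible k [] (root_state k)"
  unfolding admissible_def root_state_def
proof (intro conjI allI impI)
  fix i assume "i < k" "length ([]::nat list) < i"
  then show "\<not> (True # replicate (k - 1) False) ! i" by (cases i) auto
qed simp

text \<open>Edges span at most \<open>k\<close> levels, so every open path from \<open>o\<close> beyond level \<open>n\<close> passes through
  such a vertex \<open>w\<close>.\<close>

definition crosses :: "nat \<Rightarrow> nat \<Rightarrow> (edge \<Rightarrow> bool) \<Rightarrow> nat \<Rightarrow> bool" where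
  "crosses d k \<omega> n \<longleftrightarrow> (\<exists>w. reach d k \<omega> w \<and> length w \<le> n \<and> n < length w + k)"

lemma survives_root_iff_crosses:
  assumes k: "1 \<le> k" and d: "1 \<le> d"
  shows "survives d k [] (root_state k) n \<omega> \<longleftrightarrow> crosses d k \<omega> n"
proof -
  have run: "state_run k [] (root_state k) \<omega> x = reach_state d k \<omega> x" if "x \<in> lists {1..d}" for x
    using state_run_reach_state[OF k, of "[]" d x \<omega>] reach_state_Nil[OF k] that by simp
  show ?thesis
  proof
    assume "survives d k [] (root_state k) n \<omega>"
    then obtain x where x: "x \<in> lists {1..d}" "length x = n" "True \<in> set (reach_state d k \<omega> x)"
      unfolding survives_def using run by auto
    then obtain j where "j < k" "j \<le> length x" "reach d k \<omega> (take (length x - j) x)"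
      unfolding reach_state_def by auto
    then show "crosses d k \<omega> n"
      unfolding crosses_def using x by (intro exI[of _ "take (length x - j) x"]) auto
  next
    assume "crosses d k \<omega> n"
    then obtain w where w: "reach d k \<omega> w" "length w \<le> n" "n < length w + k"
      unfolding crosses_def by blast
    define x where "x = w @ replicate (n - length w) 1"
    have x: "x \<in> lists {1..d}" "length x = n"
      using reach_in_lists[OF w(1)] d w by (auto simp: x_def)
    have "n - length w < k \<and> n - length w \<le> length x \<and> reach d k \<omega> (take (length x - (n - length w)) x)"
      using w x by (simp add: x_def)
    then have "True \<in> set (reach_state d k \<omega> x)"
      unfolding reach_state_def by (auto intro!: image_eqI[of _ _ "n - length w"])
    then show "survives d k [] (root_state k) n \<omega>"
      unfolding survives_def using x run by auto
  qed
qed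

lemma reach_crosses:
  assumes k: "1 \<le> k"
  shows "reach d k \<omega> w \<Longrightarrow> m \<le> length w \<Longrightarrow> crosses d k \<omega> m"
proof (induction rule: reach.induct)
  case root
  then show ?case using k by (auto simp: crosses_def intro: reach.root)
next
  case (step u b r)
  have "length r \<le> k" using step.hyps(2) k by (auto simp: edges_def short_edges_def long_edges_def)
  then consider "m \<le> length u" | "length u < m" "m < length u + k" | "m = length (u @ r)"
    using step.prems unfolding length_append by linarith
  then show ?case
  proof cases
    case 1
    then show ?thesis by (rule step.IH)
  next
    case 2
    then show ?thesis unfolding crosses_def using step.hyps(1) by (intro exI[of _ u]) simp
  next
    case 3
    then show ?thesis unfolding crosses_def using reach.step[OF step.hyps] k by (intro exI[of _ "u @ r"]) simp
  qed
qed

lemma crosses_Suc_imp: "1 \<le> k \<Longrightarrow> crosses d k \<omega> (Suc n) \<Longrightarrow> crosses d k \<omega> n"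
proof -
  assume k: "1 \<le> k" and "crosses d k \<omega> (Suc n)"
  then obtain w where w: "reach d k \<omega> w" "length w \<le> Suc n" "Suc n < length w + k"
    unfolding crosses_def by blast
  show ?thesis
  proof (cases "length w \<le> n")
    case True
    then show ?thesis using w unfolding crosses_def by auto
  next
    case False
    then show ?thesis using reach_crosses[OF k w(1), of n] by simp
  qed
qed

lemma infinite_reach_iff_crosses:
  assumes k: "1 \<le> k"
  shows "infinite {v. reach d k \<omega> v} \<longleftrightarrow> (\<forall>n. crosses d k \<omega> n)"
proof
  assume inf: "infinite {v. reach d k \<omega> v}"
  show "\<forall>n. crosses d k \<omega> n"
  proof
    fix n
    have "\<exists>w. reach d k \<omega> w \<and> n \<le> length w"
    proof (rule ccontr)
      assume "\<nexists>w. reach d k \<omega> w \<and> n \<le> length w"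
      then have "{v. reach d k \<omega> v} \<subseteq> {xs. set xs \<subseteq> {1..d} \<and> length xs \<le> n}"
        using reach_in_lists by fastforce
      then show False using inf finite_subset[OF _ finite_lists_length_le[of "{1..d}" n]] by auto
    qed
    then obtain w where "reach d k \<omega> w" "n \<le> length w" by blast
    then show "crosses d k \<omega> n" by (rule reach_crosses[OF k])
  qed
next
  assume crosses: "\<forall>n. crosses d k \<omega> n"
  show "infinite {v. reach d k \<omega> v}"
  proof
    assume fin: "finite {v. reach d k \<omega> v}"
    obtain N where N: "\<And>v. v \<in> {v. reach d k \<omega> v} \<Longrightarrow> length v \<le> N"
      using finite_nat_set_iff_bounded_le[THEN iffD1, OF finite_imageI[OF fin, of length]] by auto
    obtain w where "reach d k \<omega> w" "length w \<le> N + k" "N + k < length w + k"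
      using crosses unfolding crosses_def by blast
    then show False using N[of w] by simp
  qed
qed

lemma one_minus_power_bounds:
  "0 \<le> (x::real) \<Longrightarrow> x \<le> 1 \<Longrightarrow> 0 \<le> 1 - (1 - x) ^ d \<and> 1 - (1 - x) ^ d \<le> 1"
  by (auto simp: power_le_one)

lemma one_minus_power_mono:
  "0 \<le> (x::real) \<Longrightarrow> x \<le> y \<Longrightarrow> y \<le> 1 \<Longrightarrow> 1 - (1 - x) ^ d \<le> 1 - (1 - y) ^ d"
  by (simp add: power_mono)

lemma convex_comb_bounds:
  fixes a x y :: real
  assumes "0 \<le> a" "a \<le> 1" "0 \<le> x" "x \<le> 1" "0 \<le> y" "y \<le> 1"
  shows "0 \<le> a * x + (1 - a) * y \<and> a * x + (1 - a) * y \<le> 1"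
proof -
  have "a * x \<le> a" "(1 - a) * y \<le> 1 - a"
    using assms by (simp_all add: mult_left_le)
  then show ?thesis using assms by simp
qed

lemma power_midpoint_lt:
  fixes b :: real
  assumes b: "0 \<le> b" "b < 1" and n: "2 \<le> n"
  shows "2 * ((1 + b) / 2) ^ n < 1 + b ^ n"
  using n
proof (induction n rule: nat_induct_at_least)
  case base
  have "0 < (1 - b) ^ 2" using b by simp
  then show ?case by (simp add: power2_eq_square algebra_simps)
next
  case (Suc n)
  have "2 * ((1 + b) / 2) ^ Suc n = (2 * ((1 + b) / 2) ^ n) * ((1 + b) / 2)" by simp
  also have "\<dots> < (1 + b ^ n) * ((1 + b) / 2)"
    using Suc.IH b by (intro mult_strict_right_mono) auto
  also have "\<dots> \<le> 1 + b ^ Suc n"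
  proof -
    have "0 \<le> (1 - b) * (1 - b ^ n)" using b by (simp add: power_le_one)
    then show ?thesis by (simp add: algebra_simps)
  qed
  finally show ?case .
qed

lemma one_minus_power_half_gt:
  fixes x :: real
  assumes x: "0 < x" "x \<le> 1" and d: "2 \<le> d"
  shows "(1 - (1 - x) ^ d) / 2 < 1 - (1 - x / 2) ^ d"
proof -
  have "2 * ((1 + (1 - x)) / 2) ^ d < 1 + (1 - x) ^ d"
    by (rule power_midpoint_lt) (use x d in auto)
  moreover have "(1 + (1 - x)) / 2 = 1 - x / 2" by simp
  ultimately show ?thesis by (simp add: field_simps)
qed

lemma Bernoulli_inequality_strict:
  fixes t :: real
  assumes t: "0 < t" "t \<le> 1" and n: "2 \<le> n"
  shows "1 - real n * t < (1 - t) ^ n"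
proof -
  obtain m where m: "n = Suc m" "1 \<le> m" using n by (cases n) auto
  have "1 - real n * t < (1 - t) * (1 - real m * t)"
    using t m by (simp add: algebra_simps)
  also have "\<dots> \<le> (1 - t) * (1 - t) ^ m"
    using Bernoulli_inequality[of "- t" m] t by (intro mult_left_mono) simp_all
  finally show ?thesis using m by simp
qed

lemma one_minus_power_div_lt:
  fixes y :: real
  assumes y: "0 < y" "y \<le> 1" and d: "2 \<le> d"
  shows "1 - (1 - y / d) ^ d < y"
  using Bernoulli_inequality_strict[of "y / d" d] y d by (simp add: field_simps)

lemma head_prob_bounds:
  "0 \<le> p \<Longrightarrow> p \<le> 1 \<Longrightarrow> 0 \<le> q \<Longrightarrow> q \<le> 1 \<Longrightarrow> 0 \<le> head_prob p q \<sigma> \<and> head_prob p q \<sigma> \<le> 1"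
  unfolding head_prob_def by (auto simp: mult_le_one)

lemma survival_map_tendsto:
  "((\<lambda>q'. survival_map d p q' f \<sigma>) \<longlongrightarrow> survival_map d p q f \<sigma>) (at q within A)"
proof -
  have "((\<lambda>q'. head_prob p q' \<sigma>) \<longlongrightarrow> head_prob p q \<sigma>) (at q within A)"
    unfolding head_prob_def
    by (cases "hd \<sigma>"; cases "last \<sigma>") (simp_all, (intro tendsto_intros tendsto_ident_at)+)
  then show ?thesis
    unfolding survival_map_def child_survival_def by (intro tendsto_intros)
qed

lemma survival_q1:
  assumes d: "1 \<le> d" and k: "1 \<le> k"
  shows "length \<sigma> = k \<Longrightarrow> True \<in> set \<sigma> \<Longrightarrow> survival d p 1 n \<sigma> = 1"
proof (induction n arbitrary: \<sigma>)
  case (Suc n)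
  have ne: "\<sigma> \<noteq> []" and l: "length (b # butlast \<sigma>) = k" for b
    using Suc.prems k by auto
  have "child_survival p 1 (survival d p 1 n) \<sigma> = 1"
  proof (cases "last \<sigma>")
    case True
    then have "head_prob p 1 \<sigma> = 1" by (simp add: head_prob_def)
    moreover have "survival d p 1 n (True # butlast \<sigma>) = 1" by (rule Suc.IH[OF l]) simp
    ultimately show ?thesis by (simp add: child_survival_def)
  next
    case False
    then have "True \<in> set (butlast \<sigma>)"
      using Suc.prems(2) append_butlast_last_id[OF ne] by (metis UnE empty_iff empty_set list.set(2) set_append singletonD)
    then have "survival d p 1 n (b # butlast \<sigma>) = 1" for b by (intro Suc.IH[OF l]) simp
    then show ?thesis by (simp add: child_survival_def algebra_simps)
  qed
  then show ?case using d by (simp add: survival_map_def)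
qed simp

context
  fixes d :: nat and p q :: real
  assumes p: "0 \<le> p" "p \<le> 1" and q: "0 \<le> q" "q \<le> 1"
begin

lemma survival_map_bounds:
  assumes "\<And>\<tau>. 0 \<le> f \<tau> \<and> f \<tau> \<le> 1"
  shows "0 \<le> survival_map d p q f \<sigma> \<and> survival_map d p q f \<sigma> \<le> 1"
  unfolding survival_map_def child_survival_def
  by (rule one_minus_power_bounds) (use convex_comb_bounds head_prob_bounds[OF p q] assms in auto)

lemma survival_bounds: "0 \<le> survival d p q n \<sigma> \<and> survival d p q n \<sigma> \<le> 1"
  by (induction n arbitrary: \<sigma>) (simp_all add: survival_map_bounds)

lemma survival_map_mono:
  assumes "\<And>\<tau>. length \<tau> = length \<sigma> \<Longrightarrow> 0 \<le> f \<tau> \<and> f \<tau> \<le> g \<tau> \<and> g \<tau> \<le> 1" and "\<sigma> \<noteq> []"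
  shows "survival_map d p q f \<sigma> \<le> survival_map d p q g \<sigma>"
proof -
  let ?a = "head_prob p q \<sigma>"
  have a: "0 \<le> ?a" "?a \<le> 1" using head_prob_bounds[OF p q] by auto
  have fg: "0 \<le> f (b # butlast \<sigma>)" "f (b # butlast \<sigma>) \<le> g (b # butlast \<sigma>)" "g (b # butlast \<sigma>) \<le> 1" for b
    using assms by auto
  have "?a * f (True # butlast \<sigma>) \<le> ?a * g (True # butlast \<sigma>)"
    "(1 - ?a) * f (False # butlast \<sigma>) \<le> (1 - ?a) * g (False # butlast \<sigma>)"
    using a fg by (simp_all add: mult_left_mono)
  moreover have "0 \<le> child_survival p q f \<sigma>" "child_survival p q g \<sigma> \<le> 1"
    unfolding child_survival_def using convex_comb_bounds[OF a] fg by (meson order_trans)+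
  ultimately show ?thesis
    unfolding survival_map_def by (intro one_minus_power_mono) (simp_all add: child_survival_def)
qed

lemma survival_Suc_le:
  assumes k: "1 \<le> k"
  shows "length \<sigma> = k \<Longrightarrow> survival d p q (Suc n) \<sigma> \<le> survival d p q n \<sigma>"
proof (induction n arbitrary: \<sigma>)
  case 0
  show ?case
  proof (cases "True \<in> set \<sigma>")
    case True
    then show ?thesis using survival_bounds[of "Suc 0" \<sigma>] by simp
  next
    case False
    have "\<sigma> \<noteq> []" using 0 k by auto
    then have "\<not> hd \<sigma>" "\<not> last \<sigma>" using False by (metis hd_in_set, metis last_in_set)
    then have "head_prob p q \<sigma> = 0" by (simp add: head_prob_def)
    moreover have "True \<notin> set (False # butlast \<sigma>)" using False by (auto dest: in_set_butlastD)
    ultimately show ?thesis by (simp add: survival_map_def child_survival_def)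
  qed
next
  case (Suc n)
  have "\<sigma> \<noteq> []" using Suc.prems k by auto
  have "survival_map d p q (survival d p q (Suc n)) \<sigma> \<le> survival_map d p q (survival d p q n) \<sigma>"
  proof (rule survival_map_mono[OF _ \<open>\<sigma> \<noteq> []\<close>])
    fix \<tau> :: "bool list" assume "length \<tau> = length \<sigma>"
    then show "0 \<le> survival d p q (Suc n) \<tau> \<and> survival d p q (Suc n) \<tau> \<le> survival d p q n \<tau>
        \<and> survival d p q n \<tau> \<le> 1"
      using Suc.IH[of \<tau>] Suc.prems survival_bounds[of "Suc n" \<tau>] survival_bounds[of n \<tau>]
      by (simp del: survival.simps)
  qed
  then show ?case by (simp only: survival.simps(2))
qed

end

definition survival_limit :: "nat \<Rightarrow> real \<Rightarrow> real \<Rightarrow> bool list \<Rightarrow> real" where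
  "survival_limit d p q \<sigma> = lim (\<lambda>n. survival d p q n \<sigma>)"

context
  fixes d k :: nat and p q :: real
  assumes p: "0 \<le> p" "p \<le> 1" and q: "0 \<le> q" "q \<le> 1" and k: "1 \<le> k"
begin

lemma survival_LIMSEQ:
  assumes "length \<sigma> = k"
  shows "(\<lambda>n. survival d p q n \<sigma>) \<longlonglongrightarrow> survival_limit d p q \<sigma>"
proof -
  have "decseq (\<lambda>n. survival d p q n \<sigma>)"
    by (rule decseq_SucI) (rule survival_Suc_le[OF p q k assms])
  moreover have "Bseq (\<lambda>n. survival d p q n \<sigma>)"
    by (rule BseqI'[of _ 1]) (use survival_bounds[OF p q] in auto)
  ultimately have "convergent (\<lambda>n. survival d p q n \<sigma>)"
    using Bseq_monoseq_convergent decseq_imp_monoseq by blast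
  then show ?thesis unfolding survival_limit_def by (simp add: convergent_LIMSEQ_iff)
qed

lemma survival_limit_le:
  assumes "length \<sigma> = k"
  shows "survival_limit d p q \<sigma> \<le> survival d p q n \<sigma>"
  by (rule decseq_ge[OF _ survival_LIMSEQ[OF assms]])
     (rule decseq_SucI, rule survival_Suc_le[OF p q k assms])

lemma survival_limit_bounds:
  assumes "length \<sigma> = k"
  shows "0 \<le> survival_limit d p q \<sigma> \<and> survival_limit d p q \<sigma> \<le> 1"
  using LIMSEQ_le_const[OF survival_LIMSEQ[OF assms]] survival_limit_le[OF assms, of 0]
    survival_bounds[OF p q] by (metis order_trans)

lemma survival_limit_fixpoint:
  assumes "length \<sigma> = k"
  shows "survival_limit d p q \<sigma> = survival_map d p q (survival_limit d p q) \<sigma>"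
proof -
  have "length (b # butlast \<sigma>) = k" for b using assms k by auto
  then have "(\<lambda>n. survival d p q (Suc n) \<sigma>) \<longlonglongrightarrow> survival_map d p q (survival_limit d p q) \<sigma>"
    unfolding survival.simps survival_map_def child_survival_def
    by (intro tendsto_intros survival_LIMSEQ)
  then show ?thesis
    using LIMSEQ_unique[OF LIMSEQ_Suc[OF survival_LIMSEQ[OF assms]]] by blast
qed

end

lemma subsolution_le_survival:
  assumes p: "0 \<le> p" "p \<le> 1" and q: "0 \<le> q" "q \<le> 1" and k: "1 \<le> k"
    and bounds: "\<And>\<tau>. 0 \<le> f \<tau> \<and> f \<tau> \<le> 1"
    and init: "\<And>\<tau>. length \<tau> = k \<Longrightarrow> f \<tau> \<le> survival d p q 0 \<tau>"
    and sub: "\<And>\<tau>. length \<tau> = k \<Longrightarrow> f \<tau> \<le> survival_map d p q f \<tau>"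
  shows "length \<tau> = k \<Longrightarrow> f \<tau> \<le> survival d p q n \<tau>"
proof (induction n arbitrary: \<tau>)
  case 0
  then show ?case by (rule init)
next
  case (Suc n)
  have "\<tau> \<noteq> []" using Suc.prems k by auto
  have "f \<tau> \<le> survival_map d p q f \<tau>" by (rule sub[OF Suc.prems])
  also have "\<dots> \<le> survival_map d p q (survival d p q n) \<tau>"
    by (rule survival_map_mono[OF p q _ \<open>\<tau> \<noteq> []\<close>])
       (use Suc.IH Suc.prems bounds survival_bounds[OF p q] in auto)
  finally show ?case by simp
qed

text \<open>The half limit is cut off outside states of length \<open>k\<close>, where the limit need not exist.\<close>

definition half_survival_limit :: "nat \<Rightarrow> nat \<Rightarrow> real \<Rightarrow> real \<Rightarrow> bool list \<Rightarrow> real" where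
  "half_survival_limit d k p q \<tau> = (if length \<tau> = k then survival_limit d p q \<tau> / 2 else 0)"

context
  fixes d k :: nat and p q :: real
  assumes d: "2 \<le> d" and k: "1 \<le> k" and p: "0 \<le> p" "p \<le> 1" and q: "0 \<le> q" "q \<le> 1"
begin

lemma half_survival_limit_bounds: "0 \<le> half_survival_limit d k p q \<tau> \<and> half_survival_limit d k p q \<tau> \<le> 1"
  using survival_limit_bounds[OF p q k, of \<tau> d] by (auto simp: half_survival_limit_def)

lemma half_survival_limit_lt_survival_map:
  assumes l: "length \<sigma> = k" and pos: "0 < survival_limit d p q \<sigma>"
  shows "half_survival_limit d k p q \<sigma> < survival_map d p q (half_survival_limit d k p q) \<sigma>"
proof -
  let ?f = "survival_limit d p q"
  define g where "g = child_survival p q ?f \<sigma>"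
  have lc: "length (b # butlast \<sigma>) = k" for b using l k by auto
  have fixpt: "?f \<sigma> = 1 - (1 - g) ^ d"
    using survival_limit_fixpoint[OF p q k l] by (simp add: survival_map_def g_def)
  have g: "0 \<le> g \<and> g \<le> 1"
    unfolding g_def child_survival_def
    by (rule convex_comb_bounds) (use head_prob_bounds[OF p q] survival_limit_bounds[OF p q k lc] in auto)
  with fixpt pos have "0 < g" by (cases "g = 0") auto
  have half: "child_survival p q (half_survival_limit d k p q) \<sigma> = g / 2"
    using lc by (simp add: child_survival_def half_survival_limit_def g_def field_simps)
  show ?thesis
    unfolding survival_map_def half
    using one_minus_power_half_gt[OF \<open>0 < g\<close> _ d] g fixpt l by (simp add: half_survival_limit_def)
qed

lemma exists_smaller_q_survival_ge:
  assumes "0 < q" and l: "length \<sigma> = k"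
  shows "\<exists>q'. 0 \<le> q' \<and> q' < q \<and> (\<forall>n. survival_limit d p q \<sigma> / 2 \<le> survival d p q' n \<sigma>)"
proof -
  let ?h = "half_survival_limit d k p q"
  define S where "S = {\<tau> :: bool list. length \<tau> = k \<and> 0 < survival_limit d p q \<tau>}"
  have "finite S"
    using finite_lists_length_eq[of "UNIV :: bool set" k] unfolding S_def by (simp add: Collect_conj_eq)
  then have "eventually (\<lambda>q'. \<forall>\<tau>\<in>S. ?h \<tau> < survival_map d p q' ?h \<tau>) (at_left q)"
    using half_survival_limit_lt_survival_map
    by (intro eventually_ball_finite ballI order_tendstoD(1)[OF survival_map_tendsto]) (auto simp: S_def)
  moreover have "eventually (\<lambda>q'. q' \<in> {0<..<q}) (at_left q)"
    by (rule eventually_at_left_real[OF \<open>0 < q\<close>])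
  ultimately obtain q' where q': "q' \<in> {0<..<q}" and strict: "\<forall>\<tau>\<in>S. ?h \<tau> < survival_map d p q' ?h \<tau>"
    using eventually_happens[OF eventually_conj] trivial_limit_at_left_real by blast
  have q'1: "0 \<le> q'" "q' \<le> 1" using q' q by auto
  have "?h \<tau> \<le> survival d p q' n \<tau>" if "length \<tau> = k" for n \<tau>
  proof (rule subsolution_le_survival[OF p q'1 k half_survival_limit_bounds _ _ that])
    fix \<tau> :: "bool list" assume \<tau>: "length \<tau> = k"
    show "?h \<tau> \<le> survival d p q' 0 \<tau>"
      using survival_limit_le[OF p q k \<tau>, of d 0] survival_limit_bounds[OF p q k \<tau>, of d] \<tau>
      by (auto simp: half_survival_limit_def)
    show "?h \<tau> \<le> survival_map d p q' ?h \<tau>"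
    proof (cases "\<tau> \<in> S")
      case False
      then have "?h \<tau> = 0"
        using survival_limit_bounds[OF p q k \<tau>, of d] \<tau> by (simp add: S_def half_survival_limit_def)
      then show ?thesis using survival_map_bounds[OF p q'1 half_survival_limit_bounds] by simp
    qed (use strict in auto)
  qed
  then show ?thesis using q' l by (intro exI[of _ q']) (auto simp: half_survival_limit_def)
qed

end

definition shift_state :: "bool list \<Rightarrow> bool list" where
  "shift_state \<sigma> = False # butlast \<sigma>"

lemma funpow_shift_state:
  assumes l: "length \<sigma> = k"
  shows "j \<le> k \<Longrightarrow> (shift_state ^^ j) \<sigma> = replicate j False @ take (k - j) \<sigma>"
proof (induction j)
  case (Suc j)
  have "take (k - j) \<sigma> \<noteq> []" using Suc.prems l by (cases \<sigma>) auto
  then show ?case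
    using Suc l by (simp add: shift_state_def butlast_append butlast_take)
qed (use l in simp)

context
  fixes d k :: nat and p :: real
  assumes d: "2 \<le> d" and k: "1 \<le> k" and p: "0 \<le> p" "p \<le> 1 / real d"
begin

lemma p_le_1: "p \<le> 1"
proof -
  have "1 / real d \<le> 1" using d by simp
  then show ?thesis using p by linarith
qed

abbreviation "f0 \<equiv> survival_limit d p 0"

lemma f0_bounds: "length \<sigma> = k \<Longrightarrow> 0 \<le> f0 \<sigma> \<and> f0 \<sigma> \<le> 1"
  using survival_limit_bounds[OF p(1) p_le_1 order_refl zero_le_one k] by simp

lemma f0_fixpoint: "length \<sigma> = k \<Longrightarrow> f0 \<sigma> = survival_map d p 0 f0 \<sigma>"
  using survival_limit_fixpoint[OF p(1) p_le_1 order_refl zero_le_one k] by simp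

lemma f0_False_Cons: "length \<sigma> = k \<Longrightarrow> \<not> hd \<sigma> \<Longrightarrow> f0 \<sigma> = 1 - (1 - f0 (False # butlast \<sigma>)) ^ d"
  using f0_fixpoint by (simp add: survival_map_def child_survival_def head_prob_def)

lemma f0_eq_0_if_not_hd:
  assumes l: "length \<sigma> = k" and h: "\<not> hd \<sigma>"
  shows "f0 \<sigma> = 0"
proof -
  have len: "length ((shift_state ^^ j) \<sigma>) = k" if "j \<le> k" for j
    using funpow_shift_state[OF l that] l that by simp
  have "f0 ((shift_state ^^ (k - i)) \<sigma>) = 0" if "i \<le> k" for i
    using that
  proof (induction i)
    case 0
    have "(shift_state ^^ k) \<sigma> = replicate k False" using funpow_shift_state[OF l, of k] by simp
    then show ?case
      using survival_limit_le[OF p(1) p_le_1 order_refl zero_le_one k len[of k], where d=d and n=0] f0_bounds[OF len[of k]] by simp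
  next
    case (Suc i)
    define j where "j = k - Suc i"
    have j: "j < k" "Suc j = k - i" using Suc.prems unfolding j_def by auto
    have "\<not> hd ((shift_state ^^ j) \<sigma>)"
      using h funpow_shift_state[OF l, of j] j by (cases j) simp_all
    moreover have "f0 ((shift_state ^^ Suc j) \<sigma>) = 0"
      using Suc.IH Suc.prems j(2) by simp
    then have "f0 (False # butlast ((shift_state ^^ j) \<sigma>)) = 0"
      by (simp only: funpow.simps comp_def shift_state_def)
    ultimately show ?case
      using f0_False_Cons[OF len] j by (simp add: j_def)
  qed
  from this[of k] show ?thesis by simp
qed

lemma f0_eq_0:
  assumes l: "length \<sigma> = k"
  shows "f0 \<sigma> = 0"
proof -
  define S where "S = {\<tau> :: bool list. length \<tau> = k}"
  have "finite S" "S \<noteq> {}"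
    using finite_lists_length_eq[of "UNIV :: bool set" k] l unfolding S_def by auto
  then have "Max (f0 ` S) \<in> f0 ` S" by simp
  then obtain \<sigma>' where \<sigma>': "length \<sigma>' = k" "f0 \<sigma>' = Max (f0 ` S)" unfolding S_def by auto
  have max: "f0 \<tau> \<le> f0 \<sigma>'" if "length \<tau> = k" for \<tau>
    unfolding \<sigma>'(2) using \<open>finite S\<close> that by (intro Max_ge) (auto simp: S_def)
  note \<sigma>' = \<sigma>'(1)
  let ?M = "f0 \<sigma>'"
  have "?M \<le> 0"
  proof (rule ccontr)
    assume "\<not> ?M \<le> 0"
    then have M: "0 < ?M" by simp
    then have "hd \<sigma>'" using f0_eq_0_if_not_hd[OF \<sigma>'] by auto
    have lc: "length (b # butlast \<sigma>') = k" for b using \<sigma>' k by auto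
    have "f0 (False # butlast \<sigma>') = 0" by (rule f0_eq_0_if_not_hd[OF lc]) simp
    then have "?M = 1 - (1 - p * f0 (True # butlast \<sigma>')) ^ d"
      using f0_fixpoint[OF \<sigma>'] \<open>hd \<sigma>'\<close> by (simp add: survival_map_def child_survival_def head_prob_def)
    also have "\<dots> \<le> 1 - (1 - ?M / d) ^ d"
    proof (rule one_minus_power_mono)
      show "0 \<le> p * f0 (True # butlast \<sigma>')" using p f0_bounds[OF lc] by simp
      have "p * f0 (True # butlast \<sigma>') \<le> (1 / d) * ?M"
        by (rule mult_mono) (use p max[OF lc] M f0_bounds[OF lc] in auto)
      then show "p * f0 (True # butlast \<sigma>') \<le> ?M / d" by simp
      show "?M / d \<le> 1" using f0_bounds[OF \<sigma>'] d by (simp add: field_simps)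
    qed
    also have "\<dots> < ?M" by (rule one_minus_power_div_lt[OF M _ d]) (use f0_bounds[OF \<sigma>'] in simp)
    finally show False by simp
  qed
  then show ?thesis using max[OF l] f0_bounds[OF l] by simp
qed

end

abbreviation perc_prob :: "nat \<Rightarrow> nat \<Rightarrow> real \<Rightarrow> real \<Rightarrow> real" where
  "perc_prob d k p q \<equiv> measure (perc d k p q) (perc_event d k \<inter> space (perc d k p q))"

context
  fixes d k :: nat and p q :: real
  assumes p: "0 \<le> p" "p \<le> 1" and q: "0 \<le> q" "q \<le> 1" and k: "1 \<le> k" and d: "1 \<le> d"
begin

interpretation bool_product "edges d k" "edge_pmf p q" .

lemma perc_event_eq_INT_survives:
  "perc_event d k \<inter> space PM = (\<Inter>n. {\<omega>\<in>space PM. survives d k [] (root_state k) n \<omega>})"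
  unfolding perc_event_def survives_root_iff_crosses[OF k d] infinite_reach_iff_crosses[OF k] by blast

lemma sets_survives_root: "{\<omega>\<in>space PM. survives d k [] (root_state k) n \<omega>} \<in> sets PM"
  by (rule sets_Collect_depends_on[OF edges_below_subset finite_edges_below depends_on_survives]) simp

lemma sets_perc_event: "perc_event d k \<inter> space (perc d k p q) \<in> sets (perc d k p q)"
  unfolding perc_eq_PM perc_event_eq_INT_survives using sets_survives_root by blast

lemma survival_LIMSEQ_perc_prob: "(\<lambda>n. survival d p q n (root_state k)) \<longlonglongrightarrow> perc_prob d k p q"
proof -
  interpret prob_space PM by (rule prob_space_PM)
  have "decseq (\<lambda>n. {\<omega>\<in>space PM. survives d k [] (root_state k) n \<omega>})"
    by (rule decseq_SucI) (auto simp: survives_root_iff_crosses[OF k d] intro: crosses_Suc_imp[OF k])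
  then have "(\<lambda>n. measure PM {\<omega>\<in>space PM. survives d k [] (root_state k) n \<omega>})
      \<longlonglongrightarrow> measure PM (\<Inter>n. {\<omega>\<in>space PM. survives d k [] (root_state k) n \<omega>})"
    by (intro finite_Lim_measure_decseq) (auto intro: sets_survives_root)
  then show ?thesis
    unfolding perc_eq_PM perc_event_eq_INT_survives
      measure_survives[OF p q k d lists.Nil admissible_root_state[OF k]] .
qed

lemma perc_prob_eq_survival_limit: "perc_prob d k p q = survival_limit d p q (root_state k)"
  using LIMSEQ_unique[OF survival_LIMSEQ_perc_prob survival_LIMSEQ[OF p q k]] k
  by (simp add: root_state_def)

end

context
  fixes d k :: nat and p :: real
  assumes p: "0 \<le> p" "p \<le> 1" and k: "1 \<le> k" and d: "1 \<le> d"
begin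

lemma perc_prob_q1: "perc_prob d k p 1 = 1"
proof -
  have "survival d p 1 n (root_state k) = 1" for n
    using survival_q1[OF d k] k by (simp add: root_state_def)
  then show ?thesis
    using LIMSEQ_unique[OF survival_LIMSEQ_perc_prob[OF p _ _ k d]] by simp
qed

lemma q_c_le:
  assumes "0 \<le> q" "q \<le> 1" "0 < perc_prob d k p q"
  shows "q_c d k p \<le> q"
  unfolding q_c_def
  by (rule cInf_lower) (use assms p in \<open>auto simp: Pk_def intro: bdd_belowI[of _ 0]\<close>)

lemma q_c_bounds: "0 \<le> q_c d k p \<and> q_c d k p \<le> 1"
proof
  show "q_c d k p \<le> 1" by (rule q_c_le) (simp_all add: perc_prob_q1)
  have "(p, 1) \<in> Pk d k" using p perc_prob_q1 by (simp add: Pk_def)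
  then show "0 \<le> q_c d k p" unfolding q_c_def by (intro cInf_greatest) (auto simp: Pk_def)
qed

end

lemma perc_prob_pos_smaller_q:
  assumes d: "2 \<le> d" and k: "1 \<le> k" and p: "0 \<le> p" "p \<le> 1" and q: "0 < q" "q \<le> 1"
    and pos: "0 < perc_prob d k p q"
  obtains q' where "0 \<le> q'" "q' < q" "0 < perc_prob d k p q'"
proof -
  have l: "length (root_state k) = k" using k by (simp add: root_state_def)
  obtain q' where q': "0 \<le> q'" "q' < q"
    and ge: "\<And>n. survival_limit d p q (root_state k) / 2 \<le> survival d p q' n (root_state k)"
    using exists_smaller_q_survival_ge[OF d k p _ q(2) q(1) l] q by auto
  have q'1: "q' \<le> 1" and "0 \<le> q" and d1: "1 \<le> d" using q' q d by auto
  have "survival_limit d p q (root_state k) / 2 \<le> perc_prob d k p q'"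
    by (rule LIMSEQ_le_const[OF survival_LIMSEQ_perc_prob[OF p q'(1) q'1 k d1]]) (use ge in auto)
  then have "perc_prob d k p q / 2 \<le> perc_prob d k p q'"
    using perc_prob_eq_survival_limit[OF p \<open>0 \<le> q\<close> q(2) k d1] by simp
  then show thesis using that q' pos by simp
qed

lemma perc_prob_q0:
  assumes d: "2 \<le> d" and k: "1 \<le> k" and p: "0 \<le> p" "p \<le> 1 / real d"
  shows "perc_prob d k p 0 = 0"
  using perc_prob_eq_survival_limit[OF p(1) p_le_1[OF d k p] _ _ k] f0_eq_0[OF d k p] d k
  by (simp add: root_state_def)

theorem theorem3:
  fixes d k :: nat and p :: real
  assumes "d \<ge> 2" and "k \<ge> 1" and "0 \<le> p" and "p \<le> 1 / real d"
  shows "perc_event d k \<inter> space (perc d k p (q_c d k p)) \<in> sets (perc d k p (q_c d k p))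
     \<and> measure (perc d k p (q_c d k p)) (perc_event d k \<inter> space (perc d k p (q_c d k p))) = 0"
proof -
  have p1: "p \<le> 1" by (rule p_le_1[OF assms])
  have d: "1 \<le> d" using assms(1) by simp
  let ?q = "q_c d k p"
  have q: "0 \<le> ?q" "?q \<le> 1" using q_c_bounds[OF assms(3) p1 assms(2) d] by auto
  have "perc_prob d k p ?q = 0"
  proof (rule ccontr)
    assume "perc_prob d k p ?q \<noteq> 0"
    then have pos: "0 < perc_prob d k p ?q" by (simp add: zero_less_measure_iff)
    show False
    proof (cases "?q = 0")
      case True
      then show False using pos perc_prob_q0[OF assms] by simp
    next
      case False
      then obtain q' where "0 \<le> q'" "q' < ?q" "0 < perc_prob d k p q'"
        using perc_prob_pos_smaller_q[OF assms(1,2,3) p1 _ q(2) pos] q by auto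
      then show False using q_c_le[OF assms(3) p1 assms(2) d, of q'] q by simp
    qed
  qed
  then show ?thesis using sets_perc_event[OF assms(3) p1 q assms(2) d] by simp
qed

end
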